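(* For every program $p$, environment $\sigma$ and time instant $t$: (1) if $(p,\sigma,t)\to(p',\sigma',t')$ and $(p',\sigma',t')\Downarrow(\mathit{skip},\sigma'')$ then $(p,\sigma,t)\Downarrow(\mathit{skip},\sigma'')$; (2) if $(p,\sigma,t)\to(p',\sigma',t')$ and $(p',\sigma',t')\Downarrow(\mathit{stop},\sigma'')$ then $(p,\sigma,t)\Downarrow(\mathit{stop},\sigma'')$.
   Context: Syntax. Fix variables $\mathcal{X}=\{x_1,\dots,x_n\}$. Linear terms $u::= r\mid r\cdot x\mid u_1+u_2$. Atomic programs $x:=u$ and $\bar x'=\bar u\ \mathtt{for}\ u$. Programs $p::= a\mid p;q\mid \mathtt{if}\ b\ \mathtt{then}\ p\ \mathtt{else}\ q\mid \mathtt{while}\ b\ \mathtt{do}\ p$, $b$ in the free Boolean algebra on atoms $u_1\le u_2$, $u_1\ge u_2$. Environments $\sigma\colon\mathcal{X}\to\mathbb{R}$; $u\sigma,b\sigma$ evaluation; $\sigma\triangledown[\bar v/\bar x]$ update; $\phi_\sigma$ solution of $\bar x'=\bar u$ with initial value $(\sigma(x_i))_i$. Time instants are in $\mathbb{R}_{\ge0}$. Small-step rules: $(x:=u,\sigma,t)\to(\mathit{skip},\sigma\triangledown[u\sigma/x],t)$; $(\bar x'=\bar u\ \mathtt{for}\ u,\sigma,t)\to(\mathit{stop},\sigma\triangledown[\phi_\sigma(t)/\bar x],0)$ if $t<u\sigma$; $\to(\mathit{skip},\sigma\triangledown[\phi_\sigma(u\sigma)/\bar x],t-u\sigma)$ if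 $t\ge u\sigma$; $(\mathtt{if}\ b\ \mathtt{then}\ p\ \mathtt{else}\ q,\sigma,t)\to(p,\sigma,t)$ if $b\sigma=\top$, $\to(q,\sigma,t)$ if $b\sigma=\bot$; $(\mathtt{while}\ b\ \mathtt{do}\ p,\sigma,t)\to(p;\mathtt{while}\ b\ \mathtt{do}\ p,\sigma,t)$ if $b\sigma=\top$, $\to(\mathit{skip},\sigma,t)$ if $b\sigma=\bot$; from $(p,\sigma,t)\to(\mathit{stop},\sigma',t')$ infer $(p;q,\sigma,t)\to(\mathit{stop},\sigma',t')$; from $(p,\sigma,t)\to(\mathit{skip},\sigma',t')$ infer $(p;q,\sigma,t)\to(q,\sigma',t')$; from $(p,\sigma,t)\to(p',\sigma',t')$ with $p'\notin\{\mathit{skip},\mathit{stop}\}$ infer $(p;q,\sigma,t)\to(p';q,\sigma',t')$. Big-step relation $\Downarrow$ (least relation closed under): if $t<u\sigma$ then $(\bar x'=\bar u\ \mathtt{for}\ u,\sigma,t)\Downarrow(\mathit{stop},\sigma\triangledown[\phi_\sigma(t)/\bar x])$; $(\bar x'=\bar u\ \mathtt{for}\ u,\sigma,u\sigma)\Downarrow(\mathit{skip},\sigma\triangledown[\phi_\sigma(u\sigma)/\bar x])$; $(x:=u,\sigma,0)\Downarrow(\mathit{skip},\sigma\triangledown[u\sigma/x])$; from $(p,\sigma,t)\Downarrow(\mathit{stop},\sigma')$ infer $(p;q,\sigma,t)\Downarrow(\mathit{stop},\sigma')$; from $(p,\sigma,t)\Downarrow(\mathit{skip},\sigma')$ and $(q,\sigma',t')\Downarrow(r,\sigma'')$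 infer $(p;q,\sigma,t+t')\Downarrow(r,\sigma'')$; if $b\sigma=\top$ and $(p,\sigma,t)\Downarrow(r,\sigma')$ then $(\mathtt{if}\ b\ \mathtt{then}\ p\ \mathtt{else}\ q,\sigma,t)\Downarrow(r,\sigma')$; if $b\sigma=\bot$ and $(q,\sigma,t)\Downarrow(r,\sigma')$ then the same conclusion; if $b\sigma=\top$ and $(p;\mathtt{while}\ b\ \mathtt{do}\ p,\sigma,t)\Downarrow(r,\sigma')$ then $(\mathtt{while}\ b\ \mathtt{do}\ p,\sigma,t)\Downarrow(r,\sigma')$; if $b\sigma=\bot$ then $(\mathtt{while}\ b\ \mathtt{do}\ p,\sigma,0)\Downarrow(\mathit{skip},\sigma)$. Here $r\in\{\mathit{skip},\mathit{stop}\}$. *)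

theory Defs
  imports "HOL-Analysis.Analysis"
begin

type_synonym 'v env = "'v \<Rightarrow> real"

datatype 'v lterm = LConst real | LMul real 'v | LPlus "'v lterm" "'v lterm"

primrec evalt :: "'v lterm \<Rightarrow> 'v env \<Rightarrow> real" where
  "evalt (LConst r) \<sigma> = r"
| "evalt (LMul r x) \<sigma> = r * \<sigma> x"
| "evalt (LPlus u1 u2) \<sigma> = evalt u1 \<sigma> + evalt u2 \<sigma>"

datatype 'v bexp = BTrue | BFalse | BLe "'v lterm" "'v lterm" | BGe "'v lterm" "'v lterm"
  | BNot "'v bexp" | BAnd "'v bexp" "'v bexp" | BOr "'v bexp" "'v bexp"

primrec evalb :: "'v bexp \<Rightarrow> 'v env \<Rightarrow> bool" where
  "evalb BTrue \<sigma> = True"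
| "evalb BFalse \<sigma> = False"
| "evalb (BLe u1 u2) \<sigma> = (evalt u1 \<sigma> \<le> evalt u2 \<sigma>)"
| "evalb (BGe u1 u2) \<sigma> = (evalt u1 \<sigma> \<ge> evalt u2 \<sigma>)"
| "evalb (BNot b) \<sigma> = (\<not> evalb b \<sigma>)"
| "evalb (BAnd b1 b2) \<sigma> = (evalb b1 \<sigma> \<and> evalb b2 \<sigma>)"
| "evalb (BOr b1 b2) \<sigma> = (evalb b1 \<sigma> \<or> evalb b2 \<sigma>)"

text \<open>Programs. An ODE system  x1'=u1,...,xk'=uk for u  is a list of pairs (xi, ui)
  together with the duration term u.\<close>
datatype 'v prog =
    Assign 'v "'v lterm"
  | ODE "('v \<times> 'v lterm) list" "'v lterm"
  | Seq "'v prog" "'v prog"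
  | If "'v bexp" "'v prog" "'v prog"
  | While "'v bexp" "'v prog"

datatype 'v cmd = Prog "'v prog" | Skip | Stop

text \<open>phi_sigma: the solution of the ODE system with initial value sigma; variables not
  mentioned in the system stay constant.  (For a well-formed system with distinct variables
  the solution exists and is unique, as the system is linear.)\<close>
definition sol :: "('v \<times> 'v lterm) list \<Rightarrow> 'v env \<Rightarrow> real \<Rightarrow> 'v env" where
  "sol ode \<sigma> = (THE \<phi>. \<phi> 0 = \<sigma>
      \<and> (\<forall>r<0. \<phi> r = \<sigma>)
      \<and> (\<forall>r. \<forall>x. x \<notin> fst ` set ode \<longrightarrow> \<phi> r x = \<sigma> x)
      \<and> (\<forall>s\<ge>0. \<forall>(x,u)\<in>set ode.
            ((\<lambda>r. \<phi> r x) has_real_derivative evalt u (\<phi> s)) (at s within {0..})))"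

definition upd_ode :: "('v \<times> 'v lterm) list \<Rightarrow> 'v env \<Rightarrow> 'v env \<Rightarrow> 'v env" where
  "upd_ode ode \<sigma> \<tau> = (\<lambda>x. if x \<in> fst ` set ode then \<tau> x else \<sigma> x)"

inductive small :: "'v prog \<Rightarrow> 'v env \<Rightarrow> real \<Rightarrow> 'v cmd \<Rightarrow> 'v env \<Rightarrow> real \<Rightarrow> bool" where
  s_assign: "small (Assign x u) \<sigma> t Skip (\<sigma>(x := evalt u \<sigma>)) t"
| s_ode_stop: "t < evalt u \<sigma> \<Longrightarrow>
     small (ODE ode u) \<sigma> t Stop (upd_ode ode \<sigma> (sol ode \<sigma> t)) 0"
| s_ode_skip: "t \<ge> evalt u \<sigma> \<Longrightarrow>
     small (ODE ode u) \<sigma> t Skip (upd_ode ode \<sigma> (sol ode \<sigma> (evalt u \<sigma>))) (t - evalt u \<sigma>)"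
| s_if_t: "evalb b \<sigma> \<Longrightarrow> small (If b p q) \<sigma> t (Prog p) \<sigma> t"
| s_if_f: "\<not> evalb b \<sigma> \<Longrightarrow> small (If b p q) \<sigma> t (Prog q) \<sigma> t"
| s_while_t: "evalb b \<sigma> \<Longrightarrow> small (While b p) \<sigma> t (Prog (Seq p (While b p))) \<sigma> t"
| s_while_f: "\<not> evalb b \<sigma> \<Longrightarrow> small (While b p) \<sigma> t Skip \<sigma> t"
| s_seq_stop: "small p \<sigma> t Stop \<sigma>' t' \<Longrightarrow> small (Seq p q) \<sigma> t Stop \<sigma>' t'"
| s_seq_skip: "small p \<sigma> t Skip \<sigma>' t' \<Longrightarrow> small (Seq p q) \<sigma> t (Prog q) \<sigma>' t'"
| s_seq_step: "small p \<sigma> t (Prog p') \<sigma>' t' \<Longrightarrow> small (Seq p q) \<sigma> t (Prog (Seq p' q)) \<sigma>' t'"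

inductive big :: "'v cmd \<Rightarrow> 'v env \<Rightarrow> real \<Rightarrow> 'v cmd \<Rightarrow> 'v env \<Rightarrow> bool" where
  b_ode_stop: "t < evalt u \<sigma> \<Longrightarrow>
     big (Prog (ODE ode u)) \<sigma> t Stop (upd_ode ode \<sigma> (sol ode \<sigma> t))"
| b_ode_skip: "big (Prog (ODE ode u)) \<sigma> (evalt u \<sigma>) Skip (upd_ode ode \<sigma> (sol ode \<sigma> (evalt u \<sigma>)))"
| b_assign: "big (Prog (Assign x u)) \<sigma> 0 Skip (\<sigma>(x := evalt u \<sigma>))"
| b_seq_stop: "big (Prog p) \<sigma> t Stop \<sigma>' \<Longrightarrow> big (Prog (Seq p q)) \<sigma> t Stop \<sigma>'"
| b_seq_skip: "big (Prog p) \<sigma> t Skip \<sigma>' \<Longrightarrow> big (Prog q) \<sigma>' t' r \<sigma>'' \<Longrightarrow>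
     big (Prog (Seq p q)) \<sigma> (t + t') r \<sigma>''"
| b_if_t: "evalb b \<sigma> \<Longrightarrow> big (Prog p) \<sigma> t r \<sigma>' \<Longrightarrow> big (Prog (If b p q)) \<sigma> t r \<sigma>'"
| b_if_f: "\<not> evalb b \<sigma> \<Longrightarrow> big (Prog q) \<sigma> t r \<sigma>' \<Longrightarrow> big (Prog (If b p q)) \<sigma> t r \<sigma>'"
| b_while_t: "evalb b \<sigma> \<Longrightarrow> big (Prog (Seq p (While b p))) \<sigma> t r \<sigma>' \<Longrightarrow>
     big (Prog (While b p)) \<sigma> t r \<sigma>'"
| b_while_f: "\<not> evalb b \<sigma> \<Longrightarrow> big (Prog (While b p)) \<sigma> 0 Skip \<sigma>"

end

theory Submission
  imports Defs
begin

text \<open>A small step from \<open>(p, \<sigma>, t)\<close> to \<open>(c, \<sigma>', t')\<close> consumes the duration \<open>t - t'\<close>.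
  By induction on the small step, this duration can be prepended to any big-step run of the
  successor program; a step to \<open>skip\<close> is itself a complete big-step run of duration \<open>t - t'\<close>.
  A step to \<open>skip\<close> or \<open>stop\<close> cannot be followed by a big-step run at all.\<close>

lemma not_big_Skip [simp]: "\<not> big Skip \<sigma> t r \<sigma>'"
  by (auto elim: big.cases)

lemma not_big_Stop [simp]: "\<not> big Stop \<sigma> t r \<sigma>'"
  by (auto elim: big.cases)

lemma small_Skip_imp_big:
  fixes p :: "'v prog"
  shows "small p \<sigma> t Skip \<sigma>' t' \<Longrightarrow> big (Prog p) \<sigma> (t - t') Skip \<sigma>'"
  by (induction p \<sigma> t "Skip :: 'v cmd" \<sigma>' t' rule: small.induct) (auto intro: big.intros)

lemma small_Prog_big_imp_big:
  assumes "small p \<sigma> t (Prog p') \<sigma>' t'" and "big (Prog p') \<sigma>' s r \<sigma>''"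
  shows "big (Prog p) \<sigma> (t - t' + s) r \<sigma>''"
  using assms
proof (induction p \<sigma> t "Prog p'" \<sigma>' t' arbitrary: p' s r \<sigma>'' rule: small.induct)
  case (s_seq_skip p \<sigma> t \<sigma>' t' q)
  then show ?case by (auto intro: big.b_seq_skip small_Skip_imp_big)
next
  case (s_seq_step p \<sigma> t p' \<sigma>' t' q)
  from \<open>big (Prog (Seq p' q)) \<sigma>' s r \<sigma>''\<close> show ?case
  proof (cases rule: big.cases)
    case b_seq_stop
    then show ?thesis by (auto intro: big.b_seq_stop s_seq_step.hyps(2))
  next
    case (b_seq_skip s1 \<sigma>1 s2)
    have "big (Prog p) \<sigma> (t - t' + s1) Skip \<sigma>1"
      using b_seq_skip(2) by (rule s_seq_step.hyps(2))
    from big.b_seq_skip[OF this b_seq_skip(3)] show ?thesis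
      by (simp add: b_seq_skip(1) add.assoc)
  qed
qed (auto intro: big.intros)

theorem lemma3:
  fixes p :: "'v prog" and \<sigma> :: "'v env" and t :: real
  assumes "0 \<le> t"
  shows "(small p \<sigma> t p' \<sigma>' t' \<and> big p' \<sigma>' t' Skip \<sigma>'' \<longrightarrow> big (Prog p) \<sigma> t Skip \<sigma>'')
       \<and> (small p \<sigma> t p' \<sigma>' t' \<and> big p' \<sigma>' t' Stop \<sigma>'' \<longrightarrow> big (Prog p) \<sigma> t Stop \<sigma>'')"
proof -
  have "big (Prog p) \<sigma> t r \<sigma>''"
    if step: "small p \<sigma> t p' \<sigma>' t'" and run: "big p' \<sigma>' t' r \<sigma>''" for r
  proof (cases p')
    case (Prog q)
    with step run have "big (Prog p) \<sigma> (t - t' + t') r \<sigma>''"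
      by (blast intro: small_Prog_big_imp_big)
    then show ?thesis by simp
  qed (use run in simp_all)
  then show ?thesis by blast
qed

end
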